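(* Let $G$, $H$, $J$ be rooted graphs. Then for any integers $g,j\ge 0$ and $h\ge 1$, \[ X_{S^{ghj}(G,H,J)}=X_{S^{(g+j)h0}(G,H,J)}+\sum_{i=1}^{j}\Big(X_{P^{g+h+i-1}(G,H)}\,X_{J^{j-i}}-X_{G^{g+i-1}}\,X_{P^{h+j-i}(H,J)}\Big). \]
   Context: All graphs are finite simple graphs. The chromatic symmetric function of a graph $G$ is $X_G=\sum_{\kappa}\prod_{v\in V(G)}x_{\kappa(v)}$, where $\kappa$ ranges over proper colorings $\kappa:V(G)\to\{1,2,\dots\}$. For nonnegative integers $\tau_1,\tau_2,\tau_3$ and rooted graphs $(G_i,u_i)$, $S^{\tau_1\tau_2\tau_3}(G_1,G_2,G_3)$ is obtained by taking a center vertex $c$ and three paths from $c$, disjoint except at $c$, of lengths $\tau_1,\tau_2,\tau_3$, and identifying $u_i$ with the far end $s_i$ of the $i$-th path ($s_i=c$ if $\tau_i=0$), the $G_i$ being disjoint. For rooted graphs $(G,u)$, $(H,v)$ and $k\ge0$, $P^k(G,H)$ is obtained from the disjoint union of $G$ and $H$ by adding a path of length $k$ joining $u$ and $v$ (for $k=0$ identifying them), and $G^k=P^k(G,K_1)$ is $G$ with a pendant path of length $k$ at its root. *)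

theory Defs
  imports Main "HOL-Library.FuncSet" "HOL-Library.Poly_Mapping"
begin

type_synonym 'v graph = "'v set \<times> 'v set set"

definition wf_graph :: "'v graph \<Rightarrow> bool" where
  "wf_graph G \<longleftrightarrow> finite (fst G) \<and> (\<forall>e\<in>snd G. e \<subseteq> fst G \<and> card e = 2)"

definition quot_graph :: "'v graph \<Rightarrow> ('v \<times> 'v) set \<Rightarrow> 'v set graph" where
  "quot_graph G R =
     (let r = (R \<union> R\<inverse>)\<^sup>*; cls = (\<lambda>x. r `` {x})
      in (cls ` fst G, (\<lambda>e. cls ` e) ` snd G))"

text \<open>Monomials x^m with m a finitely supported exponent vector; a formal power series
  (symmetric function) is its coefficient function.\<close>
type_synonym sfun = "(nat \<Rightarrow>\<^sub>0 nat) \<Rightarrow> int"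

definition sf_times :: "sfun \<Rightarrow> sfun \<Rightarrow> sfun" where
  "sf_times f g m = (\<Sum>p\<in>{p. fst p + snd p = m}. f (fst p) * g (snd p))"

text \<open>Chromatic symmetric function: coefficient of x^m is the number of proper colorings
  \<kappa> : V \<rightarrow> {1,2,...} with |\<kappa>^{-1}(c)| = m(c) for all colors c.\<close>
definition proper_coloring :: "'v graph \<Rightarrow> ('v \<Rightarrow> nat) \<Rightarrow> bool" where
  "proper_coloring G \<kappa> \<longleftrightarrow>
     \<kappa> \<in> fst G \<rightarrow>\<^sub>E {1..} \<and> (\<forall>e\<in>snd G. \<forall>x\<in>e. \<forall>y\<in>e. x \<noteq> y \<longrightarrow> \<kappa> x \<noteq> \<kappa> y)"

definition csf :: "'v graph \<Rightarrow> sfun" where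
  "csf G m = int (card {\<kappa>. proper_coloring G \<kappa> \<and>
                          (\<forall>c. card {v\<in>fst G. \<kappa> v = c} = Poly_Mapping.lookup m c)})"

text \<open>P^k(G,H): disjoint union of G and H plus a path of length k (vertices 0..k) from root u
  to root v; path vertex 0 is identified with u and path vertex k with v.\<close>
definition Pk_graph :: "nat \<Rightarrow> 'a graph \<Rightarrow> 'a \<Rightarrow> 'b graph \<Rightarrow> 'b \<Rightarrow> (('a + 'b) + nat) set graph" where
  "Pk_graph k G u H v = quot_graph
     ((Inl \<circ> Inl) ` fst G \<union> (Inl \<circ> Inr) ` fst H \<union> Inr ` {0..k},
      (\<lambda>e. (Inl \<circ> Inl) ` e) ` snd G \<union> (\<lambda>e. (Inl \<circ> Inr) ` e) ` snd H
        \<union> {{Inr i, Inr (Suc i)} | i. i < k})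
     {(Inr 0, Inl (Inl u)), (Inr k, Inl (Inr v))}"

definition K1 :: "unit graph" where "K1 = ({()}, {})"

definition pendant :: "'a graph \<Rightarrow> 'a \<Rightarrow> nat \<Rightarrow> (('a + unit) + nat) set graph" where
  "pendant G u k = Pk_graph k G u K1 ()"

text \<open>S^{t1 t2 t3}(G,H,J): path vertices (i,s), i \<in> {1,2,3}, 0 \<le> s \<le> t_i; all (i,0) are the
  center c, and (i,t_i) is identified with the root of the i-th graph.\<close>
definition S_graph :: "nat \<Rightarrow> nat \<Rightarrow> nat \<Rightarrow> 'a graph \<Rightarrow> 'a \<Rightarrow> 'b graph \<Rightarrow> 'b \<Rightarrow> 'c graph \<Rightarrow> 'c
    \<Rightarrow> (('a + 'b + 'c) + nat \<times> nat) set graph" where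
  "S_graph t1 t2 t3 G u H v J w = quot_graph
     ((Inl \<circ> Inl) ` fst G \<union> (Inl \<circ> Inr \<circ> Inl) ` fst H \<union> (Inl \<circ> Inr \<circ> Inr) ` fst J
        \<union> Inr ` ({(1, s) | s. s \<le> t1} \<union> {(2, s) | s. s \<le> t2} \<union> {(3, s) | s. s \<le> t3}),
      (\<lambda>e. (Inl \<circ> Inl) ` e) ` snd G \<union> (\<lambda>e. (Inl \<circ> Inr \<circ> Inl) ` e) ` snd H
        \<union> (\<lambda>e. (Inl \<circ> Inr \<circ> Inr) ` e) ` snd J
        \<union> {{Inr (1, s), Inr (1, Suc s)} | s. s < t1}
        \<union> {{Inr (2, s), Inr (2, Suc s)} | s. s < t2}
        \<union> {{Inr (3, s), Inr (3, Suc s)} | s. s < t3})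
     {(Inr (2, 0), Inr (1, 0)), (Inr (3, 0), Inr (1, 0)),
      (Inr (1, t1), Inl (Inl u)), (Inr (2, t2), Inl (Inr (Inl v))), (Inr (3, t3), Inl (Inr (Inr w)))}"

end

theory Submission
  imports Defs
begin

(* Write x, y, z for the free ends of the pendant paths of G^a, J^c and H^b, placed disjointly in one
   vertex type.  Then S^{a,b+1,c+1}(G,H,J) is their union plus the edges xy, xz, and
   S^{a+1,b+1,c}(G,H,J) is their union plus xy, yz.  Colourings with equal colours at x and y are
   counted alike by both graphs, so the difference of their chromatic symmetric functions equals
   the difference for the union plus xz and the union plus yz (triple deletion).  These two graphs
   are the disjoint unions of P^{a+b+1}(G,H) with J^c and of G^a with P^{b+c+1}(H,J), and X is
   multiplicative on disjoint unions.  Iterating this step, which moves one edge of the third leg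
   to the first, telescopes to the formula.

   The graphs of the statement are quotients of disjoint unions, so each is first identified,
   up to relabelling, with an explicit graph in the common vertex type. *)

section \<open>Colourings counted by colour multiplicities\<close>

definition color_count :: "'v set \<Rightarrow> ('v \<Rightarrow> nat) \<Rightarrow> nat \<Rightarrow>\<^sub>0 nat" where
  "color_count V \<kappa> = Abs_poly_mapping (\<lambda>c. card {x\<in>V. \<kappa> x = c})"

lemma lookup_color_count:
  assumes "finite V"
  shows "Poly_Mapping.lookup (color_count V \<kappa>) c = card {x\<in>V. \<kappa> x = c}"
proof -
  have "{c. card {x\<in>V. \<kappa> x = c} \<noteq> 0} \<subseteq> \<kappa> ` V"
    using assms by auto
  then have "finite {c. card {x\<in>V. \<kappa> x = c} \<noteq> 0}"
    using assms by (meson finite_imageI finite_subset)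
  then show ?thesis
    by (simp add: color_count_def)
qed

lemma color_count_cong:
  assumes "\<And>x. x \<in> V \<Longrightarrow> \<kappa> x = \<kappa>' x"
  shows "color_count V \<kappa> = color_count V \<kappa>'"
proof -
  have "{x\<in>V. \<kappa> x = c} = {x\<in>V. \<kappa>' x = c}" for c
    using assms by auto
  then show ?thesis
    by (simp add: color_count_def)
qed

lemma color_count_image:
  assumes "inj_on \<phi> V"
  shows "color_count (\<phi> ` V) \<kappa> = color_count V (\<kappa> \<circ> \<phi>)"
proof -
  have "{y\<in>\<phi> ` V. \<kappa> y = c} = \<phi> ` {x\<in>V. \<kappa> (\<phi> x) = c}" for c
    by auto
  moreover have "inj_on \<phi> {x\<in>V. \<kappa> (\<phi> x) = c}" for c
    using assms by (rule inj_on_subset) auto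
  ultimately show ?thesis
    by (simp add: color_count_def card_image)
qed

lemma color_count_Un:
  assumes "finite A" "finite B" "A \<inter> B = {}"
  shows "color_count (A \<union> B) \<kappa> = color_count A \<kappa> + color_count B \<kappa>"
proof (rule poly_mapping_eqI)
  fix c
  have "{x\<in>A \<union> B. \<kappa> x = c} = {x\<in>A. \<kappa> x = c} \<union> {x\<in>B. \<kappa> x = c}"
    by auto
  then have "card {x\<in>A \<union> B. \<kappa> x = c} = card {x\<in>A. \<kappa> x = c} + card {x\<in>B. \<kappa> x = c}"
    using assms by (simp add: card_Un_disjoint disjoint_iff)
  then show "Poly_Mapping.lookup (color_count (A \<union> B) \<kappa>) c
      = Poly_Mapping.lookup (color_count A \<kappa> + color_count B \<kappa>) c"
    using assms by (simp add: lookup_color_count lookup_add)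
qed

definition colorings :: "'v graph \<Rightarrow> (nat \<Rightarrow>\<^sub>0 nat) \<Rightarrow> ('v \<Rightarrow> nat) set" where
  "colorings X m = {\<kappa>. proper_coloring X \<kappa> \<and> color_count (fst X) \<kappa> = m}"

lemma csf_eq_card_colorings:
  assumes "finite (fst X)"
  shows "csf X m = int (card (colorings X m))"
proof -
  have "color_count (fst X) \<kappa> = m \<longleftrightarrow> (\<forall>c. card {v\<in>fst X. \<kappa> v = c} = Poly_Mapping.lookup m c)"
    for \<kappa>
    using assms by (simp add: poly_mapping_eq_iff fun_eq_iff lookup_color_count)
  then show ?thesis
    by (simp add: csf_def colorings_def)
qed

lemma finite_colorings:
  assumes "finite (fst X)"
  shows "finite (colorings X m)"
proof (rule finite_subset)
  show "colorings X m \<subseteq> fst X \<rightarrow>\<^sub>E Poly_Mapping.keys m"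
  proof
    fix \<kappa> assume \<kappa>: "\<kappa> \<in> colorings X m"
    have "Poly_Mapping.lookup m (\<kappa> v) = card {x\<in>fst X. \<kappa> x = \<kappa> v}" for v
      using \<kappa> assms by (auto simp: colorings_def lookup_color_count)
    then have "Poly_Mapping.lookup m (\<kappa> v) \<noteq> 0" if "v \<in> fst X" for v
      using that assms by (auto simp: card_eq_0_iff)
    then show "\<kappa> \<in> fst X \<rightarrow>\<^sub>E Poly_Mapping.keys m"
      using \<kappa> by (auto simp: colorings_def proper_coloring_def in_keys_iff)
  qed
  show "finite (fst X \<rightarrow>\<^sub>E Poly_Mapping.keys m)"
    using assms by (simp add: finite_PiE)
qed

lemma card_fibers_bij_betw:
  assumes "bij_betw F A B" "\<And>a. a \<in> A \<Longrightarrow> w' (F a) = w a"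
  shows "card {a\<in>A. w a = m} = card {b\<in>B. w' b = m}"
  using assms by (intro bij_betw_same_card bij_betw_Collect) auto

section \<open>Relabelling and quotients\<close>

definition map_graph :: "('v \<Rightarrow> 'w) \<Rightarrow> 'v graph \<Rightarrow> 'w graph" where
  "map_graph f X = (f ` fst X, (\<lambda>e. f ` e) ` snd X)"

lemma proper_coloring_map_graph_restrict:
  assumes "inj_on \<phi> V" "\<forall>e\<in>E. e \<subseteq> V" "proper_coloring (map_graph \<phi> (V,E)) \<kappa>"
  shows "proper_coloring (V,E) (restrict (\<kappa> \<circ> \<phi>) V)"
proof -
  have "\<kappa> \<in> \<phi> ` V \<rightarrow>\<^sub>E {1..}" "\<forall>e\<in>E. \<forall>x\<in>e. \<forall>y\<in>e. \<phi> x \<noteq> \<phi> y \<longrightarrow> \<kappa> (\<phi> x) \<noteq> \<kappa> (\<phi> y)"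
    using assms(3) by (auto simp: proper_coloring_def map_graph_def)
  moreover have "\<phi> x \<noteq> \<phi> y" if "e \<in> E" "x \<in> e" "y \<in> e" "x \<noteq> y" for e x y
    using that assms(1,2) by (meson inj_onD subsetD)
  ultimately show ?thesis
    using assms(2) by (auto simp: proper_coloring_def subset_iff)
qed

lemma bij_betw_proper_coloring_map_graph:
  assumes inj: "inj_on \<phi> V" and sub: "\<forall>e\<in>E. e \<subseteq> V"
  shows "bij_betw (\<lambda>\<kappa>. restrict (\<kappa> \<circ> \<phi>) V)
           {\<kappa>. proper_coloring (map_graph \<phi> (V,E)) \<kappa>} {\<kappa>. proper_coloring (V,E) \<kappa>}"
proof (rule bij_betwI)
  let ?\<psi> = "inv_into V \<phi>"
  have cancel: "?\<psi> ` \<phi> ` e = e" if "e \<subseteq> V" for e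
    using that by (rule inv_into_image_cancel[OF inj])
  have "(\<lambda>e. ?\<psi> ` e) ` (\<lambda>e. \<phi> ` e) ` E = (\<lambda>e. ?\<psi> ` \<phi> ` e) ` E"
    by (simp only: image_comp comp_def)
  also have "\<dots> = (\<lambda>e. e) ` E"
    using sub by (intro image_cong[OF refl] cancel) auto
  finally have "map_graph ?\<psi> (map_graph \<phi> (V,E)) = (V,E)"
    by (simp add: map_graph_def cancel)
  moreover have "inj_on ?\<psi> (\<phi> ` V)" "\<forall>e\<in>(\<lambda>e. \<phi> ` e) ` E. e \<subseteq> \<phi> ` V"
    using sub by (auto simp: inj_on_inv_into)
  ultimately show "(\<lambda>\<kappa>. restrict (\<kappa> \<circ> ?\<psi>) (\<phi> ` V))
      \<in> {\<kappa>. proper_coloring (V,E) \<kappa>} \<rightarrow> {\<kappa>. proper_coloring (map_graph \<phi> (V,E)) \<kappa>}"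
    using proper_coloring_map_graph_restrict[of ?\<psi> "\<phi> ` V" "(\<lambda>e. \<phi> ` e) ` E"]
    by (auto simp: map_graph_def)
  show "(\<lambda>\<kappa>. restrict (\<kappa> \<circ> \<phi>) V)
      \<in> {\<kappa>. proper_coloring (map_graph \<phi> (V,E)) \<kappa>} \<rightarrow> {\<kappa>. proper_coloring (V,E) \<kappa>}"
    using proper_coloring_map_graph_restrict[OF inj sub] by auto
  show "restrict (restrict (\<kappa> \<circ> \<phi>) V \<circ> ?\<psi>) (\<phi> ` V) = \<kappa>"
    if "\<kappa> \<in> {\<kappa>. proper_coloring (map_graph \<phi> (V,E)) \<kappa>}" for \<kappa>
  proof
    fix y
    have "\<kappa> \<in> \<phi> ` V \<rightarrow>\<^sub>E {1..}"
      using that by (simp add: proper_coloring_def map_graph_def)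
    from PiE_arb[OF this] show "restrict (restrict (\<kappa> \<circ> \<phi>) V \<circ> ?\<psi>) (\<phi> ` V) y = \<kappa> y"
      by (cases "y \<in> \<phi> ` V") (simp_all add: inv_into_into f_inv_into_f)
  qed
  show "restrict (restrict (\<kappa> \<circ> ?\<psi>) (\<phi> ` V) \<circ> \<phi>) V = \<kappa>"
    if "\<kappa> \<in> {\<kappa>. proper_coloring (V,E) \<kappa>}" for \<kappa>
  proof
    fix x
    have "\<kappa> \<in> V \<rightarrow>\<^sub>E {1..}"
      using that by (simp add: proper_coloring_def)
    from PiE_arb[OF this] show "restrict (restrict (\<kappa> \<circ> ?\<psi>) (\<phi> ` V) \<circ> \<phi>) V x = \<kappa> x"
      using inj by (cases "x \<in> V") simp_all
  qed
qed

lemma csf_map_graph_inj: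
  assumes "inj_on \<phi> V" "\<forall>e\<in>E. e \<subseteq> V" "finite V"
  shows "csf (map_graph \<phi> (V,E)) = csf (V,E)"
proof
  fix m
  let ?T = "\<lambda>\<kappa>. restrict (\<kappa> \<circ> \<phi>) V"
  have "color_count V (?T \<kappa>) = color_count (\<phi> ` V) \<kappa>" for \<kappa>
  proof -
    have "color_count V (?T \<kappa>) = color_count V (\<kappa> \<circ> \<phi>)"
      by (rule color_count_cong) simp
    then show ?thesis
      using color_count_image[OF assms(1)] by simp
  qed
  then have "card {\<kappa>\<in>{\<kappa>. proper_coloring (map_graph \<phi> (V,E)) \<kappa>}. color_count (\<phi> ` V) \<kappa> = m}
      = card {\<kappa>\<in>{\<kappa>. proper_coloring (V,E) \<kappa>}. color_count V \<kappa> = m}"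
    by (intro card_fibers_bij_betw[OF bij_betw_proper_coloring_map_graph[OF assms(1,2)]])
  then show "csf (map_graph \<phi> (V,E)) m = csf (V,E) m"
    using assms(3) by (simp add: csf_eq_card_colorings colorings_def map_graph_def)
qed

lemma csf_map_graph_cong_kernel:
  assumes sub: "\<forall>e\<in>E. e \<subseteq> V" and "finite V"
    and ker: "\<And>x y. x \<in> V \<Longrightarrow> y \<in> V \<Longrightarrow> f x = f y \<longleftrightarrow> g x = g y"
  shows "csf (map_graph f (V,E)) = csf (map_graph g (V,E))"
proof -
  define \<psi> where "\<psi> y = g (inv_into V f y)" for y
  have \<psi>f: "\<psi> (f x) = g x" if "x \<in> V" for x
    using that ker[of "inv_into V f (f x)" x] by (simp add: \<psi>_def inv_into_into f_inv_into_f)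
  have "inj_on \<psi> (f ` V)"
    by (rule inj_onI) (auto simp: \<psi>f ker)
  moreover have "map_graph \<psi> (map_graph f (V,E)) = map_graph g (V,E)"
    using sub by (force simp: map_graph_def image_image \<psi>f intro!: image_cong)
  ultimately show ?thesis
    using sub \<open>finite V\<close> csf_map_graph_inj[of \<psi> "f ` V" "(`) f ` E"]
    by (simp add: map_graph_def image_mono)
qed

lemma csf_quot_graph:
  assumes sub: "\<forall>e\<in>snd X. e \<subseteq> fst X" and fin: "finite (fst X)"
    and resp: "\<And>p q. (p,q) \<in> R \<Longrightarrow> f p = f q"
    and transversal: "\<And>x. x \<in> fst X \<Longrightarrow> \<exists>c\<in>C. (x,c) \<in> (R \<union> R\<inverse>)\<^sup>*"
    and inj: "inj_on f C"
  shows "csf (quot_graph X R) = csf (map_graph f X)"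
proof -
  let ?r = "(R \<union> R\<inverse>)\<^sup>*"
  obtain V E where X: "X = (V,E)"
    by (cases X)
  have equiv: "equiv UNIV ?r"
    by (simp add: equivI refl_rtrancl sym_rtrancl sym_Un_converse trans_rtrancl)
  have f_resp: "f x = f y" if "(x,y) \<in> ?r" for x y
    using that by induction (auto dest: resp)
  have "(x,y) \<in> ?r \<longleftrightarrow> f x = f y" if xy: "x \<in> V" "y \<in> V" for x y
  proof
    assume "f x = f y"
    obtain cx where "cx \<in> C" "(x,cx) \<in> ?r"
      using transversal[of x] xy X by auto
    moreover obtain cy where "cy \<in> C" "(y,cy) \<in> ?r"
      using transversal[of y] xy X by auto
    moreover from calculation have "cx = cy"
      using \<open>f x = f y\<close> f_resp inj by (metis inj_onD)
    ultimately show "(x,y) \<in> ?r"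
      using equiv by (metis equiv_def symD transD)
  qed (rule f_resp)
  then have "csf (map_graph (\<lambda>x. ?r `` {x}) (V,E)) = csf (map_graph f (V,E))"
    using sub fin X by (intro csf_map_graph_cong_kernel) (auto simp: eq_equiv_class_iff[OF equiv])
  then show ?thesis
    by (simp add: X quot_graph_def map_graph_def Let_def)
qed

section \<open>Disjoint unions and triple deletion\<close>

lemma finite_sum_decompositions:
  fixes m :: "'a \<Rightarrow>\<^sub>0 nat"
  shows "finite {p. fst p + snd p = m}"
proof -
  let ?P = "{p. fst p + snd p = m}"
  let ?r = "\<lambda>p. restrict (Poly_Mapping.lookup (fst p)) (Poly_Mapping.keys m)"
  have le: "Poly_Mapping.lookup (fst p) c \<le> Poly_Mapping.lookup m c" if "p \<in> ?P" for p c
    using that by (auto simp: lookup_add)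
  have "inj_on ?r ?P"
  proof (rule inj_onI)
    fix p q assume p: "p \<in> ?P" and q: "q \<in> ?P" and eq: "?r p = ?r q"
    have "Poly_Mapping.lookup (fst p) c = Poly_Mapping.lookup (fst q) c" for c
    proof (cases "c \<in> Poly_Mapping.keys m")
      case True
      then show ?thesis using fun_cong[OF eq, of c] by simp
    next
      case False
      then show ?thesis using le[OF p, of c] le[OF q, of c] by (simp add: in_keys_iff)
    qed
    then have "fst p = fst q"
      by (simp add: poly_mapping_eqI)
    moreover have "fst p + snd p = fst q + snd q"
      using p q by simp
    ultimately show "p = q"
      by (simp add: prod_eq_iff)
  qed
  moreover have "?r ` ?P \<subseteq> PiE (Poly_Mapping.keys m) (\<lambda>c. {..Poly_Mapping.lookup m c})"
    using le by (auto simp: PiE_iff)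
  then have "finite (?r ` ?P)"
    by (rule finite_subset) (simp add: finite_PiE)
  ultimately show ?thesis
    by (rule finite_imageD[rotated])
qed

lemma card_fibers_sum_Times:
  fixes wx :: "'x \<Rightarrow> 'm::plus" and wy :: "'y \<Rightarrow> 'm"
  assumes "finite {p. fst p + snd p = m}"
    and "\<And>k. finite {x\<in>X. wx x = k}" and "\<And>k. finite {y\<in>Y. wy y = k}"
  shows "card {z\<in>X \<times> Y. wx (fst z) + wy (snd z) = m}
    = (\<Sum>p | fst p + snd p = m. card {x\<in>X. wx x = fst p} * card {y\<in>Y. wy y = snd p})"
proof -
  have "{z\<in>X \<times> Y. wx (fst z) + wy (snd z) = m}
      = (\<Union>p\<in>{p. fst p + snd p = m}. {x\<in>X. wx x = fst p} \<times> {y\<in>Y. wy y = snd p})"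
    by auto
  moreover have "card (\<Union>p\<in>{p. fst p + snd p = m}. {x\<in>X. wx x = fst p} \<times> {y\<in>Y. wy y = snd p})
      = (\<Sum>p | fst p + snd p = m. card ({x\<in>X. wx x = fst p} \<times> {y\<in>Y. wy y = snd p}))"
    using assms by (intro card_UN_disjoint) auto
  ultimately show ?thesis
    by (simp add: card_cartesian_product)
qed

lemma proper_coloring_restrict:
  assumes "proper_coloring (V,E) \<kappa>" "V' \<subseteq> V" "E' \<subseteq> E" "\<forall>e\<in>E'. e \<subseteq> V'"
  shows "proper_coloring (V',E') (restrict \<kappa> V')"
  using assms by (auto simp: proper_coloring_def restrict_PiE_iff subset_iff PiE_iff)

lemma proper_coloring_Un:
  assumes "proper_coloring (VA,EA) a" "proper_coloring (VB,EB) b"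
    and "VA \<inter> VB = {}" "\<forall>e\<in>EA. e \<subseteq> VA" "\<forall>e\<in>EB. e \<subseteq> VB"
  shows "proper_coloring (VA \<union> VB, EA \<union> EB) (\<lambda>x. if x \<in> VA then a x else b x)"
proof -
  have a: "a \<in> VA \<rightarrow>\<^sub>E {1..}" "\<forall>e\<in>EA. \<forall>x\<in>e. \<forall>y\<in>e. x \<noteq> y \<longrightarrow> a x \<noteq> a y"
    and b: "b \<in> VB \<rightarrow>\<^sub>E {1..}" "\<forall>e\<in>EB. \<forall>x\<in>e. \<forall>y\<in>e. x \<noteq> y \<longrightarrow> b x \<noteq> b y"
    using assms(1,2) by (simp_all add: proper_coloring_def)
  have "(\<lambda>x. if x \<in> VA then a x else b x) \<in> VA \<union> VB \<rightarrow>\<^sub>E {1..}"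
    using a(1) b(1) PiE_arb[OF b(1)] by (auto simp: PiE_iff extensional_def)
  moreover have "\<forall>e\<in>EA \<union> EB. \<forall>x\<in>e. \<forall>y\<in>e. x \<noteq> y \<longrightarrow>
      (if x \<in> VA then a x else b x) \<noteq> (if y \<in> VA then a y else b y)"
    using a(2) b(2) assms(3-5) by (auto 0 4 simp: subset_iff disjoint_iff)
  ultimately show ?thesis
    by (simp add: proper_coloring_def)
qed

lemma bij_betw_proper_coloring_Un:
  assumes disj: "VA \<inter> VB = {}" and sub: "\<forall>e\<in>EA. e \<subseteq> VA" "\<forall>e\<in>EB. e \<subseteq> VB"
  shows "bij_betw (\<lambda>\<kappa>. (restrict \<kappa> VA, restrict \<kappa> VB)) {\<kappa>. proper_coloring (VA \<union> VB, EA \<union> EB) \<kappa>}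
           ({\<kappa>. proper_coloring (VA,EA) \<kappa>} \<times> {\<kappa>. proper_coloring (VB,EB) \<kappa>})"
proof (rule bij_betwI[where g = "\<lambda>(a,b) x. if x \<in> VA then a x else b x"])
  show "(\<lambda>\<kappa>. (restrict \<kappa> VA, restrict \<kappa> VB)) \<in> {\<kappa>. proper_coloring (VA \<union> VB, EA \<union> EB) \<kappa>}
      \<rightarrow> {\<kappa>. proper_coloring (VA,EA) \<kappa>} \<times> {\<kappa>. proper_coloring (VB,EB) \<kappa>}"
    using sub proper_coloring_restrict[of "VA \<union> VB" "EA \<union> EB"] by auto
  show "(\<lambda>(a,b) x. if x \<in> VA then a x else b x)
      \<in> {\<kappa>. proper_coloring (VA,EA) \<kappa>} \<times> {\<kappa>. proper_coloring (VB,EB) \<kappa>}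
      \<rightarrow> {\<kappa>. proper_coloring (VA \<union> VB, EA \<union> EB) \<kappa>}"
    using proper_coloring_Un[OF _ _ assms] by auto
  show "(\<lambda>(a,b) x. if x \<in> VA then a x else b x) (restrict \<kappa> VA, restrict \<kappa> VB) = \<kappa>"
    if "\<kappa> \<in> {\<kappa>. proper_coloring (VA \<union> VB, EA \<union> EB) \<kappa>}" for \<kappa>
  proof
    fix x
    have "\<kappa> \<in> VA \<union> VB \<rightarrow>\<^sub>E {1..}"
      using that by (simp add: proper_coloring_def)
    from PiE_arb[OF this]
    show "(\<lambda>(a,b) x. if x \<in> VA then a x else b x) (restrict \<kappa> VA, restrict \<kappa> VB) x = \<kappa> x"
      by simp
  qed
  show "(restrict ((\<lambda>(a,b) x. if x \<in> VA then a x else b x) ab) VA,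
         restrict ((\<lambda>(a,b) x. if x \<in> VA then a x else b x) ab) VB) = ab"
    if "ab \<in> {\<kappa>. proper_coloring (VA,EA) \<kappa>} \<times> {\<kappa>. proper_coloring (VB,EB) \<kappa>}" for ab
  proof -
    obtain a b where ab: "ab = (a,b)"
      by (cases ab)
    with that have "a \<in> VA \<rightarrow>\<^sub>E {1..}" "b \<in> VB \<rightarrow>\<^sub>E {1..}"
      by (simp_all add: proper_coloring_def)
    from PiE_arb[OF this(1)] PiE_arb[OF this(2)]
    have "restrict (\<lambda>x. if x \<in> VA then a x else b x) VA = a"
      "restrict (\<lambda>x. if x \<in> VA then a x else b x) VB = b"
      using disj by (auto simp: fun_eq_iff)
    then show ?thesis
      by (simp add: ab)
  qed
qed

lemma csf_Un:
  assumes "finite VA" "finite VB" "VA \<inter> VB = {}" "\<forall>e\<in>EA. e \<subseteq> VA" "\<forall>e\<in>EB. e \<subseteq> VB"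
  shows "csf (VA \<union> VB, EA \<union> EB) = sf_times (csf (VA,EA)) (csf (VB,EB))"
proof
  fix m
  let ?PA = "{\<kappa>. proper_coloring (VA,EA) \<kappa>}" and ?PB = "{\<kappa>. proper_coloring (VB,EB) \<kappa>}"
  have "color_count VA (restrict \<kappa> VA) + color_count VB (restrict \<kappa> VB) = color_count (VA \<union> VB) \<kappa>"
    for \<kappa>
    using assms(1-3) by (simp add: color_count_Un color_count_cong[of _ "restrict \<kappa> _" \<kappa>])
  then have "card {\<kappa>\<in>{\<kappa>. proper_coloring (VA \<union> VB, EA \<union> EB) \<kappa>}. color_count (VA \<union> VB) \<kappa> = m}
      = card {z\<in>?PA \<times> ?PB. color_count VA (fst z) + color_count VB (snd z) = m}"
    by (intro card_fibers_bij_betw[OF bij_betw_proper_coloring_Un[OF assms(3-5)]]) simp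
  then have "card (colorings (VA \<union> VB, EA \<union> EB) m)
      = card {z\<in>?PA \<times> ?PB. color_count VA (fst z) + color_count VB (snd z) = m}"
    by (simp add: colorings_def)
  also have "\<dots> = (\<Sum>p | fst p + snd p = m.
      card (colorings (VA,EA) (fst p)) * card (colorings (VB,EB) (snd p)))"
    using assms(1,2) finite_colorings[of "(VA,EA)"] finite_colorings[of "(VB,EB)"]
    by (subst card_fibers_sum_Times) (simp_all add: finite_sum_decompositions colorings_def)
  finally show "csf (VA \<union> VB, EA \<union> EB) m = sf_times (csf (VA,EA)) (csf (VB,EB)) m"
    using assms(1,2) by (simp add: csf_eq_card_colorings sf_times_def)
qed

lemma colorings_insert_edge:
  assumes "x \<noteq> y"
  shows "colorings (V, insert {x,y} E) m = {\<kappa>\<in>colorings (V,E) m. \<kappa> x \<noteq> \<kappa> y}"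
  using assms by (auto simp: colorings_def proper_coloring_def)

lemma csf_triple_deletion:
  assumes "finite V" "x \<noteq> y" "x \<noteq> z" "y \<noteq> z"
  shows "csf (V, insert {x,y} (insert {x,z} E)) m - csf (V, insert {x,y} (insert {y,z} E)) m
       = csf (V, insert {x,z} E) m - csf (V, insert {y,z} E) m"
proof -
  define P where "P = colorings (V,E) m"
  have split: "card {\<kappa>\<in>P. Q \<kappa>} = card {\<kappa>\<in>P. Q \<kappa> \<and> \<kappa> x \<noteq> \<kappa> y} + card {\<kappa>\<in>P. Q \<kappa> \<and> \<kappa> x = \<kappa> y}"
    for Q
  proof -
    have "finite P"
      using assms(1) by (simp add: P_def finite_colorings)
    then have "card ({\<kappa>\<in>P. Q \<kappa> \<and> \<kappa> x \<noteq> \<kappa> y} \<union> {\<kappa>\<in>P. Q \<kappa> \<and> \<kappa> x = \<kappa> y})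
        = card {\<kappa>\<in>P. Q \<kappa> \<and> \<kappa> x \<noteq> \<kappa> y} + card {\<kappa>\<in>P. Q \<kappa> \<and> \<kappa> x = \<kappa> y}"
      by (intro card_Un_disjoint) auto
    moreover have "{\<kappa>\<in>P. Q \<kappa> \<and> \<kappa> x \<noteq> \<kappa> y} \<union> {\<kappa>\<in>P. Q \<kappa> \<and> \<kappa> x = \<kappa> y} = {\<kappa>\<in>P. Q \<kappa>}"
      by auto
    ultimately show ?thesis
      by simp
  qed
  have "{\<kappa>\<in>P. \<kappa> x \<noteq> \<kappa> z \<and> \<kappa> x = \<kappa> y} = {\<kappa>\<in>P. \<kappa> y \<noteq> \<kappa> z \<and> \<kappa> x = \<kappa> y}"
    by auto
  moreover have "colorings (V, insert {x,y} (insert {x,z} E)) m = {\<kappa>\<in>P. \<kappa> x \<noteq> \<kappa> z \<and> \<kappa> x \<noteq> \<kappa> y}"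
    and "colorings (V, insert {x,y} (insert {y,z} E)) m = {\<kappa>\<in>P. \<kappa> y \<noteq> \<kappa> z \<and> \<kappa> x \<noteq> \<kappa> y}"
    and "colorings (V, insert {x,z} E) m = {\<kappa>\<in>P. \<kappa> x \<noteq> \<kappa> z}"
    and "colorings (V, insert {y,z} E) m = {\<kappa>\<in>P. \<kappa> y \<noteq> \<kappa> z}"
    using assms(2-4) by (auto simp: colorings_insert_edge P_def)
  ultimately show ?thesis
    using assms(1) split[of "\<lambda>\<kappa>. \<kappa> x \<noteq> \<kappa> z"] split[of "\<lambda>\<kappa>. \<kappa> y \<noteq> \<kappa> z"]
    by (simp add: csf_eq_card_colorings)
qed

section \<open>Paths\<close>

definition path_vertices :: "(nat \<Rightarrow> 'v) \<Rightarrow> nat \<Rightarrow> 'v set" where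
  "path_vertices \<phi> n = \<phi> ` {..n}"

definition path_edges :: "(nat \<Rightarrow> 'v) \<Rightarrow> nat \<Rightarrow> 'v set set" where
  "path_edges \<phi> n = (\<lambda>k. {\<phi> k, \<phi> (Suc k)}) ` {..<n}"

lemma finite_path_vertices [simp]: "finite (path_vertices \<phi> n)"
  by (simp add: path_vertices_def)

lemma start_in_path_vertices [simp]: "\<phi> 0 \<in> path_vertices \<phi> n"
  by (simp add: path_vertices_def)

lemma path_edges_subset: "e \<in> path_edges \<phi> n \<Longrightarrow> e \<subseteq> path_vertices \<phi> n"
  by (auto simp: path_edges_def path_vertices_def)

lemma path_vertices_cong: "(\<And>k. k \<le> n \<Longrightarrow> \<phi> k = \<psi> k) \<Longrightarrow> path_vertices \<phi> n = path_vertices \<psi> n"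
  by (simp add: path_vertices_def)

lemma path_edges_cong: "(\<And>k. k \<le> n \<Longrightarrow> \<phi> k = \<psi> k) \<Longrightarrow> path_edges \<phi> n = path_edges \<psi> n"
  unfolding path_edges_def by (rule image_cong) auto

lemma image_path_vertices: "f ` path_vertices \<phi> n = path_vertices (f \<circ> \<phi>) n"
  by (simp add: path_vertices_def image_comp)

lemma image_path_edges: "(\<lambda>e. f ` e) ` path_edges \<phi> n = path_edges (f \<circ> \<phi>) n"
  by (simp add: path_edges_def image_comp comp_def)

lemma path_vertices_Suc: "path_vertices \<phi> (Suc n) = insert (\<phi> 0) (path_vertices (\<lambda>k. \<phi> (Suc k)) n)"
  by (simp add: path_vertices_def atMost_Suc_eq_insert_0 image_comp comp_def)

lemma path_edges_Suc: "path_edges \<phi> (Suc n) = insert {\<phi> 0, \<phi> 1} (path_edges (\<lambda>k. \<phi> (Suc k)) n)"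
  by (simp add: path_edges_def lessThan_Suc_eq_insert_0 image_comp comp_def)

lemma path_vertices_add:
  "path_vertices \<phi> (n + m) = path_vertices \<phi> n \<union> path_vertices (\<lambda>k. \<phi> (n + k)) m"
proof -
  have "(\<lambda>k. n + k) ` {..m} = {n..n + m}"
    using image_add_atLeastAtMost[of n 0 m] by (simp add: atLeast0AtMost add.commute)
  then have "{..n + m} = {..n} \<union> (\<lambda>k. n + k) ` {..m}"
    by auto
  then show ?thesis
    by (simp add: path_vertices_def image_Un image_comp comp_def)
qed

lemma path_edges_add:
  "path_edges \<phi> (n + m) = path_edges \<phi> n \<union> path_edges (\<lambda>k. \<phi> (n + k)) m"
proof -
  have "(\<lambda>k. n + k) ` {..<m} = {n..<n + m}"
    using image_add_atLeastLessThan[of n 0 m] by (simp add: atLeast0LessThan add.commute)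
  then have "{..<n + m} = {..<n} \<union> (\<lambda>k. n + k) ` {..<m}"
    by auto
  then show ?thesis
    by (simp add: path_edges_def image_Un image_comp comp_def)
qed

lemma path_vertices_rev: "path_vertices (\<lambda>k. \<phi> (n - k)) n = path_vertices \<phi> n"
proof -
  have "k \<in> (\<lambda>k. n - k) ` {..n}" if "k \<le> n" for k
    using that by (intro image_eqI[of k _ "n - k"]) auto
  then have "(\<lambda>k. n - k) ` {..n} = {..n}"
    by auto
  then show ?thesis
    unfolding path_vertices_def by (metis image_image)
qed

lemma path_edges_rev: "path_edges (\<lambda>k. \<phi> (n - k)) n = path_edges \<phi> n"
proof -
  have "k \<in> (\<lambda>k. n - Suc k) ` {..<n}" if "k < n" for k
    using that by (intro image_eqI[of k _ "n - Suc k"]) auto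
  then have "(\<lambda>k. n - Suc k) ` {..<n} = {..<n}"
    by auto
  moreover have "path_edges (\<lambda>k. \<phi> (n - k)) n = (\<lambda>j. {\<phi> j, \<phi> (Suc j)}) ` (\<lambda>k. n - Suc k) ` {..<n}"
  proof -
    have "{\<phi> (n - k), \<phi> (n - Suc k)} = {\<phi> (n - Suc k), \<phi> (Suc (n - Suc k))}" if "k < n" for k
      using that by (simp add: Suc_diff_Suc insert_commute)
    then show ?thesis
      unfolding path_edges_def image_image by (rule image_cong[OF refl]) simp
  qed
  ultimately show ?thesis
    by (simp add: path_edges_def)
qed

lemma path_vertices_case_nat: "path_vertices (case_nat x \<phi>) (Suc n) = insert x (path_vertices \<phi> n)"
  by (simp add: path_vertices_Suc)

lemma path_edges_case_nat: "path_edges (case_nat x \<phi>) (Suc n) = insert {x, \<phi> 0} (path_edges \<phi> n)"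
  by (simp add: path_edges_Suc)

definition join_paths :: "(nat \<Rightarrow> 'v) \<Rightarrow> nat \<Rightarrow> (nat \<Rightarrow> 'v) \<Rightarrow> nat \<Rightarrow> 'v" where
  "join_paths \<alpha> n \<beta> i = (if i \<le> n then \<alpha> (n - i) else \<beta> (i - Suc n))"

lemma path_vertices_join_paths:
  "path_vertices (join_paths \<alpha> n \<beta>) (n + Suc m)
     = path_vertices \<alpha> n \<union> insert (\<alpha> 0) (path_vertices \<beta> m)"
proof -
  have "path_vertices (join_paths \<alpha> n \<beta>) n = path_vertices \<alpha> n"
    using path_vertices_rev[of \<alpha> n] by (auto simp: join_paths_def cong: path_vertices_cong)
  moreover have "path_vertices (\<lambda>k. join_paths \<alpha> n \<beta> (n + k)) (Suc m)
      = path_vertices (case_nat (\<alpha> 0) \<beta>) (Suc m)"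
    by (rule path_vertices_cong) (simp add: join_paths_def split: nat.split)
  ultimately show ?thesis
    by (simp only: path_vertices_add) (simp add: path_vertices_case_nat)
qed

lemma path_edges_join_paths:
  "path_edges (join_paths \<alpha> n \<beta>) (n + Suc m) = path_edges \<alpha> n \<union> insert {\<alpha> 0, \<beta> 0} (path_edges \<beta> m)"
proof -
  have "path_edges (join_paths \<alpha> n \<beta>) n = path_edges \<alpha> n"
    using path_edges_rev[of \<alpha> n] by (auto simp: join_paths_def cong: path_edges_cong)
  moreover have "path_edges (\<lambda>k. join_paths \<alpha> n \<beta> (n + k)) (Suc m)
      = path_edges (case_nat (\<alpha> 0) \<beta>) (Suc m)"
    by (rule path_edges_cong) (simp add: join_paths_def split: nat.split)
  ultimately show ?thesis
    by (simp only: path_edges_add) (simp add: path_edges_case_nat)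
qed

section \<open>Explicit models of the glued graphs\<close>

lemma wf_graph_edge_subset: "wf_graph X \<Longrightarrow> e \<in> snd X \<Longrightarrow> x \<in> e \<Longrightarrow> x \<in> fst X"
  by (auto simp: wf_graph_def)

definition Pk_pre :: "nat \<Rightarrow> 'a graph \<Rightarrow> 'b graph \<Rightarrow> (('a + 'b) + nat) graph" where
  "Pk_pre k G H =
     ((Inl \<circ> Inl) ` fst G \<union> (Inl \<circ> Inr) ` fst H \<union> path_vertices Inr k,
      (\<lambda>e. (Inl \<circ> Inl) ` e) ` snd G \<union> (\<lambda>e. (Inl \<circ> Inr) ` e) ` snd H \<union> path_edges Inr k)"

definition Pk_glue :: "nat \<Rightarrow> 'a \<Rightarrow> 'b \<Rightarrow> (('a + 'b) + nat) rel" where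
  "Pk_glue k u v = {(Inr 0, Inl (Inl u)), (Inr k, Inl (Inr v))}"

lemma Pk_graph_eq_quot_graph: "Pk_graph k G u H v = quot_graph (Pk_pre k G H) (Pk_glue k u v)"
proof -
  have edges: "path_edges Inr k = {{Inr i, Inr (Suc i)} | i. i < k}"
    by (auto simp: path_edges_def)
  show ?thesis
    unfolding Pk_graph_def Pk_pre_def Pk_glue_def path_vertices_def edges
    by (simp add: atLeast0AtMost)
qed

text \<open>For \<open>k = 0\<close> the two roots are identified, so only \<open>u\<close> represents them.\<close>

definition Pk_transversal :: "nat \<Rightarrow> 'a graph \<Rightarrow> 'b graph \<Rightarrow> 'b \<Rightarrow> (('a + 'b) + nat) set" where
  "Pk_transversal k G H v =
     (Inl \<circ> Inl) ` fst G \<union> (Inl \<circ> Inr) ` (if k = 0 then fst H - {v} else fst H) \<union> Inr ` {0<..<k}"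

lemma Pk_transversal_meets_classes:
  assumes "u \<in> fst G" "v \<in> fst H" and x: "x \<in> fst (Pk_pre k G H)"
  shows "\<exists>c\<in>Pk_transversal k G H v. (x,c) \<in> (Pk_glue k u v \<union> (Pk_glue k u v)\<inverse>)\<^sup>*"
proof -
  let ?r = "(Pk_glue k u v \<union> (Pk_glue k u v)\<inverse>)\<^sup>*" and ?C = "Pk_transversal k G H v"
  have u: "(Inr 0, Inl (Inl u)) \<in> ?r" "Inl (Inl u) \<in> ?C" and v: "(Inr k, Inl (Inr v)) \<in> ?r"
    using assms(1) by (auto simp: Pk_glue_def Pk_transversal_def)
  from x consider (G) a where "x = Inl (Inl a)" "a \<in> fst G"
    | (H) b where "x = Inl (Inr b)" "b \<in> fst H" | (path) i where "x = Inr i" "i \<le> k"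
    by (auto simp: Pk_pre_def path_vertices_def)
  then show ?thesis
  proof cases
    case G
    then show ?thesis by (auto simp: Pk_transversal_def)
  next
    case (H b)
    show ?thesis
    proof (cases "k = 0 \<and> b = v")
      case True
      then have "(x, Inr 0) \<in> ?r"
        using H by (auto simp: Pk_glue_def)
      then show ?thesis
        using u by (blast intro: rtrancl_trans)
    qed (use H in \<open>auto simp: Pk_transversal_def\<close>)
  next
    case (path i)
    consider "i = 0" | "i = k" "k \<noteq> 0" | "0 < i" "i < k"
      using path(2) by linarith
    then show ?thesis
    proof cases
      case 1
      then show ?thesis using path u by blast
    next
      case 2
      then have "Inl (Inr v) \<in> ?C"
        using assms(2) by (simp add: Pk_transversal_def)
      then show ?thesis using path 2 v by blast
    qed (use path in \<open>auto simp: Pk_transversal_def\<close>)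
  qed
qed

lemma csf_Pk_graph_eq:
  fixes \<iota>G :: "'a \<Rightarrow> 'w" and \<iota>H :: "'b \<Rightarrow> 'w"
  assumes G: "wf_graph G" "u \<in> fst G" and H: "wf_graph H" "v \<in> fst H"
    and ends: "\<phi> 0 = \<iota>G u" "\<phi> k = \<iota>H v"
    and inj: "inj_on (case_sum (case_sum \<iota>G \<iota>H) \<phi>) (Pk_transversal k G H v)"
  shows "csf (Pk_graph k G u H v) = csf (\<iota>G ` fst G \<union> \<iota>H ` fst H \<union> path_vertices \<phi> k,
           (\<lambda>e. \<iota>G ` e) ` snd G \<union> (\<lambda>e. \<iota>H ` e) ` snd H \<union> path_edges \<phi> k)"
proof -
  let ?f = "case_sum (case_sum \<iota>G \<iota>H) \<phi>"
  have "csf (quot_graph (Pk_pre k G H) (Pk_glue k u v)) = csf (map_graph ?f (Pk_pre k G H))"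
  proof (rule csf_quot_graph[OF _ _ _ Pk_transversal_meets_classes[OF G(2) H(2)] inj])
    show "\<forall>e\<in>snd (Pk_pre k G H). e \<subseteq> fst (Pk_pre k G H)"
      using G(1) H(1) by (auto simp: Pk_pre_def dest: path_edges_subset wf_graph_edge_subset)
    show "finite (fst (Pk_pre k G H))"
      using G H by (simp add: Pk_pre_def wf_graph_def)
    show "?f p = ?f q" if "(p,q) \<in> Pk_glue k u v" for p q
      using that ends by (auto simp: Pk_glue_def)
  qed
  moreover have "map_graph ?f (Pk_pre k G H) = (\<iota>G ` fst G \<union> \<iota>H ` fst H \<union> path_vertices \<phi> k,
           (\<lambda>e. \<iota>G ` e) ` snd G \<union> (\<lambda>e. \<iota>H ` e) ` snd H \<union> path_edges \<phi> k)"
    by (simp add: Pk_pre_def map_graph_def image_Un image_image image_path_vertices image_path_edges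
        comp_def)
  ultimately show ?thesis
    by (simp add: Pk_graph_eq_quot_graph)
qed

lemma csf_pendant_eq:
  fixes \<iota> :: "'a \<Rightarrow> 'w" and \<psi> :: "nat \<Rightarrow> 'w"
  assumes G: "wf_graph G" "u \<in> fst G" and root: "\<psi> n = \<iota> u"
    and inj: "inj_on \<iota> (fst G)" "inj_on \<psi> {..<n}" and disj: "\<iota> ` fst G \<inter> \<psi> ` {..<n} = {}"
  shows "csf (pendant G u n)
    = csf (\<iota> ` fst G \<union> path_vertices \<psi> n, (\<lambda>e. \<iota> ` e) ` snd G \<union> path_edges \<psi> n)"
proof -
  let ?\<phi> = "\<lambda>i. \<psi> (n - i)"
  have K1: "wf_graph K1" "() \<in> fst K1"
    by (simp_all add: wf_graph_def K1_def)
  have "inj_on (case_sum (case_sum \<iota> (\<lambda>_. \<psi> 0)) ?\<phi>) (Pk_transversal n G K1 ())"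
  proof -
    have "\<psi> i \<noteq> \<psi> j" if "i < n" "j < n" "i \<noteq> j" for i j
      using inj(2) that by (auto dest: inj_onD)
    moreover have "\<psi> (n - i) = \<psi> (n - j) \<longleftrightarrow> i = j" if "0 < i" "i < n" "0 < j" "j < n" for i j
      using inj(2) that inj_onD[of \<psi> "{..<n}" "n - i" "n - j"] by auto
    moreover have "\<iota> a \<noteq> \<psi> i" "\<psi> i \<noteq> \<iota> a" if "a \<in> fst G" "i < n" for a i
      using disj that by blast+
    ultimately show ?thesis
      using inj(1) by (auto simp: inj_on_def Pk_transversal_def K1_def)
  qed
  with G K1 root have "csf (pendant G u n)
    = csf (\<iota> ` fst G \<union> (\<lambda>_. \<psi> 0) ` fst K1 \<union> path_vertices ?\<phi> n,
        (\<lambda>e. \<iota> ` e) ` snd G \<union> (\<lambda>e. (\<lambda>_. \<psi> 0) ` e) ` snd K1 \<union> path_edges ?\<phi> n)"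
    unfolding pendant_def by (intro csf_Pk_graph_eq) simp_all
  then show ?thesis
    by (simp add: K1_def path_vertices_rev path_edges_rev insert_absorb)
qed

type_synonym ('a, 'b, 'c) spider_vertex = "('a + 'b + 'c) + nat \<times> nat"

definition S_pre :: "nat \<Rightarrow> nat \<Rightarrow> nat \<Rightarrow> 'a graph \<Rightarrow> 'b graph \<Rightarrow> 'c graph
    \<Rightarrow> ('a, 'b, 'c) spider_vertex graph" where
  "S_pre t1 t2 t3 G H J =
     ((Inl \<circ> Inl) ` fst G \<union> (Inl \<circ> Inr \<circ> Inl) ` fst H \<union> (Inl \<circ> Inr \<circ> Inr) ` fst J
        \<union> path_vertices (\<lambda>s. Inr (1,s)) t1 \<union> path_vertices (\<lambda>s. Inr (2,s)) t2
        \<union> path_vertices (\<lambda>s. Inr (3,s)) t3,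
      (\<lambda>e. (Inl \<circ> Inl) ` e) ` snd G \<union> (\<lambda>e. (Inl \<circ> Inr \<circ> Inl) ` e) ` snd H
        \<union> (\<lambda>e. (Inl \<circ> Inr \<circ> Inr) ` e) ` snd J
        \<union> path_edges (\<lambda>s. Inr (1,s)) t1 \<union> path_edges (\<lambda>s. Inr (2,s)) t2
        \<union> path_edges (\<lambda>s. Inr (3,s)) t3)"

definition S_glue :: "nat \<Rightarrow> nat \<Rightarrow> nat \<Rightarrow> 'a \<Rightarrow> 'b \<Rightarrow> 'c \<Rightarrow> ('a, 'b, 'c) spider_vertex rel"
  where
  "S_glue t1 t2 t3 u v w =
     {(Inr (2, 0), Inr (1, 0)), (Inr (3, 0), Inr (1, 0)), (Inr (1, t1), Inl (Inl u)),
      (Inr (2, t2), Inl (Inr (Inl v))), (Inr (3, t3), Inl (Inr (Inr w)))}"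

lemma S_graph_eq_quot_graph:
  "S_graph t1 t2 t3 G u H v J w = quot_graph (S_pre t1 t2 t3 G H J) (S_glue t1 t2 t3 u v w)"
proof -
  have edges: "{{Inr (i, s), Inr (i, Suc s)} | s. s < t} = path_edges (\<lambda>s. Inr (i,s)) t"
    for i t :: nat
    by (auto simp: path_edges_def)
  have vertices: "Inr ` ({(1::nat, s) | s. s \<le> t1} \<union> {(2, s) | s. s \<le> t2} \<union> {(3, s) | s. s \<le> t3})
      = path_vertices (\<lambda>s. Inr (1,s)) t1 \<union> path_vertices (\<lambda>s. Inr (2,s)) t2
        \<union> path_vertices (\<lambda>s. Inr (3,s)) t3"
    by (auto simp: path_vertices_def)
  show ?thesis
    unfolding S_graph_def S_pre_def S_glue_def vertices edges by (simp only: Un_assoc)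
qed

text \<open>The centre \<open>Inr (1,0)\<close> represents itself only if no leg has length \<open>0\<close>; otherwise it is
  glued to a root.\<close>

definition S_transversal :: "nat \<Rightarrow> nat \<Rightarrow> nat \<Rightarrow> 'a graph \<Rightarrow> 'b graph \<Rightarrow> 'c graph
    \<Rightarrow> ('a, 'b, 'c) spider_vertex set" where
  "S_transversal t1 t2 t3 G H J =
     (Inl \<circ> Inl) ` fst G \<union> (Inl \<circ> Inr \<circ> Inl) ` fst H \<union> (Inl \<circ> Inr \<circ> Inr) ` fst J
     \<union> {Inr (i,s) | i s. 0 < s \<and> (i = 1 \<and> s < t1 \<or> i = 2 \<and> s < t2 \<or> i = 3 \<and> s < t3)}
     \<union> (if 0 < t1 \<and> 0 < t2 \<and> 0 < t3 then {Inr (1,0)} else {})"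

lemma S_transversal_meets_center:
  assumes "u \<in> fst G" "v \<in> fst H" "w \<in> fst J"
  shows "\<exists>c\<in>S_transversal t1 t2 t3 G H J.
    (Inr (1,0), c) \<in> (S_glue t1 t2 t3 u v w \<union> (S_glue t1 t2 t3 u v w)\<inverse>)\<^sup>*"
proof -
  let ?R = "S_glue t1 t2 t3 u v w" and ?C = "S_transversal t1 t2 t3 G H J"
  consider "t1 = 0" | "t2 = 0" | "t3 = 0" | "0 < t1 \<and> 0 < t2 \<and> 0 < t3"
    by auto
  then show ?thesis
  proof cases
    case 1
    then have "(Inr (1,0), Inl (Inl u)) \<in> ?R"
      by (simp add: S_glue_def)
    then show ?thesis
      using assms(1) by (intro bexI[of _ "Inl (Inl u)"]) (auto simp: S_transversal_def)
  next
    case 2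
    then have "(Inr (1,0), Inr (2,0)) \<in> ?R\<inverse>" "(Inr (2,0), Inl (Inr (Inl v))) \<in> ?R"
      by (simp_all add: S_glue_def)
    then have "(Inr (1,0), Inl (Inr (Inl v))) \<in> (?R \<union> ?R\<inverse>)\<^sup>*"
      by (meson UnI1 UnI2 converse_rtrancl_into_rtrancl r_into_rtrancl)
    then show ?thesis
      using assms(2) by (intro bexI[of _ "Inl (Inr (Inl v))"]) (auto simp: S_transversal_def)
  next
    case 3
    then have "(Inr (1,0), Inr (3,0)) \<in> ?R\<inverse>" "(Inr (3,0), Inl (Inr (Inr w))) \<in> ?R"
      by (simp_all add: S_glue_def)
    then have "(Inr (1,0), Inl (Inr (Inr w))) \<in> (?R \<union> ?R\<inverse>)\<^sup>*"
      by (meson UnI1 UnI2 converse_rtrancl_into_rtrancl r_into_rtrancl)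
    then show ?thesis
      using assms(3) by (intro bexI[of _ "Inl (Inr (Inr w))"]) (auto simp: S_transversal_def)
  next
    case 4
    then show ?thesis
      by (intro bexI[of _ "Inr (1,0)"]) (auto simp: S_transversal_def)
  qed
qed

lemma S_transversal_meets_classes:
  assumes roots: "u \<in> fst G" "v \<in> fst H" "w \<in> fst J" and x: "x \<in> fst (S_pre t1 t2 t3 G H J)"
  shows "\<exists>c\<in>S_transversal t1 t2 t3 G H J.
    (x,c) \<in> (S_glue t1 t2 t3 u v w \<union> (S_glue t1 t2 t3 u v w)\<inverse>)\<^sup>*"
proof -
  let ?R = "S_glue t1 t2 t3 u v w" and ?C = "S_transversal t1 t2 t3 G H J"
  let ?r = "(?R \<union> ?R\<inverse>)\<^sup>*"
  define t where "t i = (if i = 1 then t1 else if i = (2::nat) then t2 else t3)" for i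
  define root :: "nat \<Rightarrow> ('a, 'b, 'c) spider_vertex"
    where "root i = (if i = 1 then Inl (Inl u) else if i = 2 then Inl (Inr (Inl v))
      else Inl (Inr (Inr w)))" for i
  have leg: "\<exists>c\<in>?C. (Inr (i,s), c) \<in> ?r" if i: "i \<in> {1,2,3}" and "s \<le> t i" for i s
  proof -
    consider "s = t i" | "0 < s" "s < t i" | "s = 0"
      using \<open>s \<le> t i\<close> by linarith
    then show ?thesis
    proof cases
      case 1
      then have "(Inr (i,s), root i) \<in> ?R"
        using i by (auto simp: S_glue_def t_def root_def)
      moreover have "root i \<in> ?C"
        using i roots by (auto simp: root_def S_transversal_def)
      ultimately show ?thesis by blast
    next
      case 2
      then show ?thesis
        using i by (intro bexI[of _ "Inr (i,s)"]) (auto simp: S_transversal_def t_def)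
    next
      case 3
      have "i = 1 \<or> (Inr (i,0), Inr (1,0)) \<in> ?R"
        using i by (auto simp: S_glue_def)
      then have "(Inr (i,s), Inr (1,0)) \<in> ?r"
        using 3 by (auto intro: r_into_rtrancl)
      then show ?thesis
        using S_transversal_meets_center[OF roots] by (blast intro: rtrancl_trans)
    qed
  qed
  from x consider "x \<in> (Inl \<circ> Inl) ` fst G \<union> (Inl \<circ> Inr \<circ> Inl) ` fst H \<union> (Inl \<circ> Inr \<circ> Inr) ` fst J"
    | s where "x = Inr (1,s)" "s \<le> t 1" | s where "x = Inr (2,s)" "s \<le> t 2"
    | s where "x = Inr (3,s)" "s \<le> t 3"
    by (auto simp: S_pre_def path_vertices_def t_def)
  then show ?thesis
  proof cases
    case 1
    then show ?thesis by (intro bexI[of _ x]) (auto simp: S_transversal_def)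
  qed (use leg in blast)+
qed

definition spider_map :: "(nat \<Rightarrow> ('a, 'b, 'c) spider_vertex) \<Rightarrow> (nat \<Rightarrow> ('a, 'b, 'c) spider_vertex)
    \<Rightarrow> (nat \<Rightarrow> ('a, 'b, 'c) spider_vertex) \<Rightarrow> ('a, 'b, 'c) spider_vertex \<Rightarrow> ('a, 'b, 'c) spider_vertex"
  where
  "spider_map \<alpha> \<beta> \<gamma> = case_sum Inl (\<lambda>(i,s). if i = 1 then \<alpha> s else if i = 2 then \<beta> s else \<gamma> s)"

lemma csf_S_graph_eq:
  assumes G: "wf_graph G" "u \<in> fst G" and H: "wf_graph H" "v \<in> fst H"
    and J: "wf_graph J" "w \<in> fst J"
    and center: "\<beta> 0 = \<alpha> 0" "\<gamma> 0 = \<alpha> 0"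
    and ends: "\<alpha> t1 = Inl (Inl u)" "\<beta> t2 = Inl (Inr (Inl v))" "\<gamma> t3 = Inl (Inr (Inr w))"
    and inj: "inj_on (spider_map \<alpha> \<beta> \<gamma>) (S_transversal t1 t2 t3 G H J)"
  shows "csf (S_graph t1 t2 t3 G u H v J w) =
    csf ((Inl \<circ> Inl) ` fst G \<union> (Inl \<circ> Inr \<circ> Inl) ` fst H \<union> (Inl \<circ> Inr \<circ> Inr) ` fst J
           \<union> path_vertices \<alpha> t1 \<union> path_vertices \<beta> t2 \<union> path_vertices \<gamma> t3,
         (\<lambda>e. (Inl \<circ> Inl) ` e) ` snd G \<union> (\<lambda>e. (Inl \<circ> Inr \<circ> Inl) ` e) ` snd H
           \<union> (\<lambda>e. (Inl \<circ> Inr \<circ> Inr) ` e) ` snd J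
           \<union> path_edges \<alpha> t1 \<union> path_edges \<beta> t2 \<union> path_edges \<gamma> t3)"
proof -
  let ?f = "spider_map \<alpha> \<beta> \<gamma>" and ?X = "S_pre t1 t2 t3 G H J"
  have "csf (quot_graph ?X (S_glue t1 t2 t3 u v w)) = csf (map_graph ?f ?X)"
  proof (rule csf_quot_graph[OF _ _ _ S_transversal_meets_classes[OF G(2) H(2) J(2)] inj])
    show "\<forall>e\<in>snd ?X. e \<subseteq> fst ?X"
      using G(1) H(1) J(1) by (auto simp: S_pre_def dest: path_edges_subset wf_graph_edge_subset)
    show "finite (fst ?X)"
      using G H J by (simp add: S_pre_def wf_graph_def)
    show "?f p = ?f q" if "(p,q) \<in> S_glue t1 t2 t3 u v w" for p q
      using that center ends by (auto simp: S_glue_def spider_map_def)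
  qed
  moreover have "map_graph ?f ?X =
    ((Inl \<circ> Inl) ` fst G \<union> (Inl \<circ> Inr \<circ> Inl) ` fst H \<union> (Inl \<circ> Inr \<circ> Inr) ` fst J
       \<union> path_vertices \<alpha> t1 \<union> path_vertices \<beta> t2 \<union> path_vertices \<gamma> t3,
     (\<lambda>e. (Inl \<circ> Inl) ` e) ` snd G \<union> (\<lambda>e. (Inl \<circ> Inr \<circ> Inl) ` e) ` snd H
       \<union> (\<lambda>e. (Inl \<circ> Inr \<circ> Inr) ` e) ` snd J
       \<union> path_edges \<alpha> t1 \<union> path_edges \<beta> t2 \<union> path_edges \<gamma> t3)"
    by (simp add: S_pre_def map_graph_def image_Un image_image image_path_vertices image_path_edges
        comp_def spider_map_def)
  ultimately show ?thesis
    by (simp add: S_graph_eq_quot_graph)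
qed

lemma csf_Pk_graph_join_paths:
  fixes \<iota>G :: "'a \<Rightarrow> 'w" and \<iota>H :: "'b \<Rightarrow> 'w"
  assumes G: "wf_graph G" "u \<in> fst G" and H: "wf_graph H" "v \<in> fst H"
    and ends: "\<alpha> n = \<iota>G u" "\<beta> m = \<iota>H v"
    and inj: "inj_on (case_sum (case_sum \<iota>G \<iota>H) (join_paths \<alpha> n \<beta>))
      (Pk_transversal (n + Suc m) G H v)"
  shows "csf (Pk_graph (n + Suc m) G u H v)
    = csf (\<iota>G ` fst G \<union> \<iota>H ` fst H \<union> path_vertices \<alpha> n \<union> path_vertices \<beta> m,
        (\<lambda>e. \<iota>G ` e) ` snd G \<union> (\<lambda>e. \<iota>H ` e) ` snd H \<union> path_edges \<alpha> n
          \<union> insert {\<alpha> 0, \<beta> 0} (path_edges \<beta> m))"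
proof -
  have "join_paths \<alpha> n \<beta> 0 = \<iota>G u" "join_paths \<alpha> n \<beta> (n + Suc m) = \<iota>H v"
    using ends by (simp_all add: join_paths_def)
  from csf_Pk_graph_eq[OF G H this inj] show ?thesis
    unfolding path_vertices_join_paths path_edges_join_paths by (simp add: Un_ac insert_absorb)
qed

section \<open>The spider in one vertex type\<close>

locale spider =
  fixes G :: "'a graph" and u :: 'a and H :: "'b graph" and v :: 'b and J :: "'c graph" and w :: 'c
  assumes G: "wf_graph G" "u \<in> fst G" and H: "wf_graph H" "v \<in> fst H"
    and J: "wf_graph J" "w \<in> fst J"
begin

definition gpath :: "nat \<Rightarrow> nat \<Rightarrow> ('a, 'b, 'c) spider_vertex" where
  "gpath n s = (if s = n then Inl (Inl u) else Inr (1, s))"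

definition hpath :: "nat \<Rightarrow> nat \<Rightarrow> ('a, 'b, 'c) spider_vertex" where
  "hpath n s = (if s = n then Inl (Inr (Inl v)) else Inr (2, s))"

definition jpath :: "nat \<Rightarrow> nat \<Rightarrow> ('a, 'b, 'c) spider_vertex" where
  "jpath n s = (if s = n then Inl (Inr (Inr w)) else Inr (3, s))"

lemma path_ends [simp]:
  "gpath n n = Inl (Inl u)" "hpath n n = Inl (Inr (Inl v))" "jpath n n = Inl (Inr (Inr w))"
  by (simp_all add: gpath_def hpath_def jpath_def)

definition Gpend :: "nat \<Rightarrow> ('a, 'b, 'c) spider_vertex graph" where
  "Gpend n = ((Inl \<circ> Inl) ` fst G \<union> path_vertices (gpath n) n,
     (\<lambda>e. (Inl \<circ> Inl) ` e) ` snd G \<union> path_edges (gpath n) n)"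

definition Hpend :: "nat \<Rightarrow> ('a, 'b, 'c) spider_vertex graph" where
  "Hpend n = ((Inl \<circ> Inr \<circ> Inl) ` fst H \<union> path_vertices (hpath n) n,
     (\<lambda>e. (Inl \<circ> Inr \<circ> Inl) ` e) ` snd H \<union> path_edges (hpath n) n)"

definition Jpend :: "nat \<Rightarrow> ('a, 'b, 'c) spider_vertex graph" where
  "Jpend n = ((Inl \<circ> Inr \<circ> Inr) ` fst J \<union> path_vertices (jpath n) n,
     (\<lambda>e. (Inl \<circ> Inr \<circ> Inr) ` e) ` snd J \<union> path_edges (jpath n) n)"

lemma csf_pendant_G: "csf (pendant G u n) = csf (Gpend n)"
  unfolding Gpend_def using G by (intro csf_pendant_eq) (auto simp: gpath_def inj_on_def)

lemma csf_pendant_J: "csf (pendant J w n) = csf (Jpend n)"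
  unfolding Jpend_def using J by (intro csf_pendant_eq) (auto simp: jpath_def inj_on_def)

definition pendants :: "nat \<Rightarrow> nat \<Rightarrow> nat \<Rightarrow> ('a, 'b, 'c) spider_vertex graph" where
  "pendants a b c =
     (fst (Gpend a) \<union> fst (Hpend b) \<union> fst (Jpend c), snd (Gpend a) \<union> snd (Hpend b) \<union> snd (Jpend c))"

lemma csf_Pk_graph_GH:
  "csf (Pk_graph (a + Suc b) G u H v)
     = csf (fst (Gpend a) \<union> fst (Hpend b),
         insert {gpath a 0, hpath b 0} (snd (Gpend a) \<union> snd (Hpend b)))"
proof -
  have "inj_on (case_sum (case_sum (Inl \<circ> Inl) (Inl \<circ> Inr \<circ> Inl))
      (join_paths (gpath a) a (hpath b))) (Pk_transversal (a + Suc b) G H v)"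
    unfolding inj_on_def Pk_transversal_def join_paths_def gpath_def hpath_def
    by (auto split: if_splits)
  from csf_Pk_graph_join_paths[OF G H _ _ this] show ?thesis
    by (simp add: Gpend_def Hpend_def Un_ac insert_absorb)
qed

lemma csf_Pk_graph_HJ:
  "csf (Pk_graph (b + Suc c) H v J w)
     = csf (fst (Hpend b) \<union> fst (Jpend c),
         insert {hpath b 0, jpath c 0} (snd (Hpend b) \<union> snd (Jpend c)))"
proof -
  have "inj_on (case_sum (case_sum (Inl \<circ> Inr \<circ> Inl) (Inl \<circ> Inr \<circ> Inr))
      (join_paths (hpath b) b (jpath c))) (Pk_transversal (b + Suc c) H J w)"
    unfolding inj_on_def Pk_transversal_def join_paths_def hpath_def jpath_def
    by (auto split: if_splits)
  from csf_Pk_graph_join_paths[OF H J _ _ this] show ?thesis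
    by (simp add: Hpend_def Jpend_def Un_ac insert_absorb)
qed

lemma csf_S_graph_center_G:
  "csf (S_graph a (Suc b) (Suc c) G u H v J w)
     = csf (fst (pendants a b c),
         insert {gpath a 0, jpath c 0} (insert {gpath a 0, hpath b 0} (snd (pendants a b c))))"
proof -
  have "inj_on (spider_map (gpath a) (case_nat (gpath a 0) (hpath b))
      (case_nat (gpath a 0) (jpath c))) (S_transversal a (Suc b) (Suc c) G H J)"
    unfolding inj_on_def S_transversal_def spider_map_def gpath_def hpath_def jpath_def
    by (auto split: if_splits nat.splits)
  from csf_S_graph_eq[OF G H J _ _ _ _ _ this] show ?thesis
    unfolding path_vertices_case_nat path_edges_case_nat
    by (simp add: pendants_def Gpend_def Hpend_def Jpend_def insert_absorb insert_commute Un_ac)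
qed

lemma csf_S_graph_center_J:
  "csf (S_graph (Suc a) (Suc b) c G u H v J w)
     = csf (fst (pendants a b c),
         insert {gpath a 0, jpath c 0} (insert {jpath c 0, hpath b 0} (snd (pendants a b c))))"
proof -
  have "inj_on (spider_map (case_nat (jpath c 0) (gpath a)) (case_nat (jpath c 0) (hpath b))
      (jpath c)) (S_transversal (Suc a) (Suc b) c G H J)"
    unfolding inj_on_def S_transversal_def spider_map_def gpath_def hpath_def jpath_def
    by (auto split: if_splits nat.splits)
  from csf_S_graph_eq[OF G H J _ _ _ _ _ this] show ?thesis
    unfolding path_vertices_case_nat path_edges_case_nat
    by (simp add: pendants_def Gpend_def Hpend_def Jpend_def insert_absorb insert_commute Un_ac)
qed

lemma finite_pend: "finite (fst (Gpend n))" "finite (fst (Hpend n))" "finite (fst (Jpend n))"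
  using G H J by (simp_all add: wf_graph_def Gpend_def Hpend_def Jpend_def)

lemma pend_edges_subset:
  "\<forall>e\<in>snd (Gpend n). e \<subseteq> fst (Gpend n)" "\<forall>e\<in>snd (Hpend n). e \<subseteq> fst (Hpend n)"
  "\<forall>e\<in>snd (Jpend n). e \<subseteq> fst (Jpend n)"
  using G(1) H(1) J(1)
  by (auto simp: Gpend_def Hpend_def Jpend_def dest: path_edges_subset wf_graph_edge_subset)

lemma csf_pendants_insert_GH_edge:
  "csf (fst (pendants a b c), insert {gpath a 0, hpath b 0} (snd (pendants a b c)))
     = sf_times (csf (Pk_graph (a + Suc b) G u H v)) (csf (pendant J w c))"
proof -
  have "(fst (Gpend a) \<union> fst (Hpend b)) \<inter> fst (Jpend c) = {}"
    by (auto simp: Gpend_def Hpend_def Jpend_def path_vertices_def gpath_def hpath_def jpath_def)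
  moreover have "{gpath a 0, hpath b 0} \<subseteq> fst (Gpend a) \<union> fst (Hpend b)"
    by (simp add: Gpend_def Hpend_def)
  ultimately have "csf (fst (Gpend a) \<union> fst (Hpend b) \<union> fst (Jpend c),
        insert {gpath a 0, hpath b 0} (snd (Gpend a) \<union> snd (Hpend b)) \<union> snd (Jpend c))
      = sf_times
          (csf (fst (Gpend a) \<union> fst (Hpend b), insert {gpath a 0, hpath b 0} (snd (Gpend a) \<union> snd (Hpend b))))
          (csf (fst (Jpend c), snd (Jpend c)))"
    using finite_pend pend_edges_subset[of a] pend_edges_subset[of b] pend_edges_subset[of c]
    by (intro csf_Un) auto
  then show ?thesis
    unfolding csf_Pk_graph_GH csf_pendant_J by (simp add: pendants_def)
qed

lemma csf_pendants_insert_HJ_edge: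
  "csf (fst (pendants a b c), insert {hpath b 0, jpath c 0} (snd (pendants a b c)))
     = sf_times (csf (pendant G u a)) (csf (Pk_graph (b + Suc c) H v J w))"
proof -
  have "fst (Gpend a) \<inter> (fst (Hpend b) \<union> fst (Jpend c)) = {}"
    by (auto simp: Gpend_def Hpend_def Jpend_def path_vertices_def gpath_def hpath_def jpath_def)
  moreover have "{hpath b 0, jpath c 0} \<subseteq> fst (Hpend b) \<union> fst (Jpend c)"
    by (simp add: Hpend_def Jpend_def)
  ultimately have "csf (fst (Gpend a) \<union> (fst (Hpend b) \<union> fst (Jpend c)),
        snd (Gpend a) \<union> insert {hpath b 0, jpath c 0} (snd (Hpend b) \<union> snd (Jpend c)))
      = sf_times (csf (fst (Gpend a), snd (Gpend a)))
          (csf (fst (Hpend b) \<union> fst (Jpend c),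
            insert {hpath b 0, jpath c 0} (snd (Hpend b) \<union> snd (Jpend c))))"
    using finite_pend pend_edges_subset[of a] pend_edges_subset[of b] pend_edges_subset[of c]
    by (intro csf_Un) auto
  then show ?thesis
    unfolding csf_Pk_graph_HJ csf_pendant_G by (simp add: pendants_def Un_ac)
qed

lemma csf_S_graph_step:
  "csf (S_graph a (Suc b) (Suc c) G u H v J w) m - csf (S_graph (Suc a) (Suc b) c G u H v J w) m
   = sf_times (csf (Pk_graph (a + Suc b) G u H v)) (csf (pendant J w c)) m
     - sf_times (csf (pendant G u a)) (csf (Pk_graph (b + Suc c) H v J w)) m"
proof -
  let ?x = "gpath a 0" and ?y = "jpath c 0" and ?z = "hpath b 0"
  let ?V = "fst (pendants a b c)" and ?E = "snd (pendants a b c)"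
  have "csf (S_graph a (Suc b) (Suc c) G u H v J w) m - csf (S_graph (Suc a) (Suc b) c G u H v J w) m
      = csf (?V, insert {?x,?y} (insert {?x,?z} ?E)) m
        - csf (?V, insert {?x,?y} (insert {?y,?z} ?E)) m"
    by (simp add: csf_S_graph_center_G csf_S_graph_center_J)
  also have "\<dots> = csf (?V, insert {?x,?z} ?E) m - csf (?V, insert {?z,?y} ?E) m"
    using finite_pend
    by (subst csf_triple_deletion)
      (simp_all add: pendants_def gpath_def hpath_def jpath_def insert_commute)
  finally show ?thesis
    by (simp add: csf_pendants_insert_GH_edge csf_pendants_insert_HJ_edge)
qed

end

lemma telescope_diagonal:
  fixes F :: "nat \<Rightarrow> nat \<Rightarrow> 'a::comm_monoid_add"
  assumes step: "\<And>a b. F a (Suc b) = F (Suc a) b + D a b"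
  shows "F g j = F (g + j) 0 + (\<Sum>i = 1..j. D (g + i - 1) (j - i))"
proof (induction j arbitrary: g)
  case 0
  then show ?case by simp
next
  case (Suc j)
  have "(\<Sum>i = 1..Suc j. D (g + i - 1) (Suc j - i))
      = D g j + (\<Sum>i = Suc 1..Suc j. D (g + i - 1) (Suc j - i))"
    using sum.atLeast_Suc_atMost[of 1 "Suc j" "\<lambda>i. D (g + i - 1) (Suc j - i)"] by simp
  also have "(\<Sum>i = Suc 1..Suc j. D (g + i - 1) (Suc j - i))
      = (\<Sum>i = 1..j. D (Suc g + i - 1) (j - i))"
    by (simp only: sum.shift_bounds_cl_Suc_ivl) simp
  finally show ?case
    using step[of g j] Suc.IH[of "Suc g"] by (simp add: ac_simps)
qed

theorem proposition4p2:
  fixes G :: "'a graph" and u :: 'a and H :: "'b graph" and v :: 'b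
    and J :: "'c graph" and w :: 'c and g h j :: nat
  assumes "wf_graph G" "u \<in> fst G" "wf_graph H" "v \<in> fst H" "wf_graph J" "w \<in> fst J"
    and "h \<ge> 1"
  shows "csf (S_graph g h j G u H v J w) =
    (\<lambda>m. csf (S_graph (g + j) h 0 G u H v J w) m
       + (\<Sum>i = 1..j. sf_times (csf (Pk_graph (g + h + i - 1) G u H v)) (csf (pendant J w (j - i))) m
                     - sf_times (csf (pendant G u (g + i - 1))) (csf (Pk_graph (h + j - i) H v J w)) m))"
proof -
  interpret spider G u H v J w
    using assms(1-6) by unfold_locales
  obtain b where h: "h = Suc b"
    using assms(7) by (cases h) auto
  define D where "D m a c = sf_times (csf (Pk_graph (a + h) G u H v)) (csf (pendant J w c)) m
      - sf_times (csf (pendant G u a)) (csf (Pk_graph (h + c) H v J w)) m" for m a c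
  have "csf (S_graph g h j G u H v J w) m
      = csf (S_graph (g + j) h 0 G u H v J w) m + (\<Sum>i = 1..j. D m (g + i - 1) (j - i))" for m
  proof (rule telescope_diagonal[where F = "\<lambda>a c. csf (S_graph a h c G u H v J w) m"])
    show "csf (S_graph a h (Suc c) G u H v J w) m = csf (S_graph (Suc a) h c G u H v J w) m + D m a c"
      for a c
      using csf_S_graph_step[of a b c m] by (simp add: D_def h add.commute)
  qed
  moreover have "(\<Sum>i = 1..j. D m (g + i - 1) (j - i))
      = (\<Sum>i = 1..j. sf_times (csf (Pk_graph (g + h + i - 1) G u H v)) (csf (pendant J w (j - i))) m
                   - sf_times (csf (pendant G u (g + i - 1))) (csf (Pk_graph (h + j - i) H v J w)) m)" for m
    by (intro sum.cong) (auto simp: D_def ac_simps)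
  ultimately show ?thesis
    by (simp add: fun_eq_iff)
qed

end
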